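(* For integers $n\geq m\geq 2$ with $n-m$ odd, the polynomial $K_q(n,m)$ is symmetric and unimodal: writing $K_q(n,m)=\sum_{i=0}^{D}c_iq^i$ with $D=m(n-m)+m$, one has $c_i=c_{D-i}$ for all $0\le i\le D$, and $c_0\le c_1\le\cdots\le c_{\lfloor D/2\rfloor}\ge c_{\lfloor D/2\rfloor+1}\ge\cdots\ge c_D$.
   Context: For integers $n\ge m\ge 0$ the Gaussian polynomial is ${n\brack m}=\prod_{i=0}^{m-1}\frac{1-q^{n-i}}{1-q^{m-i}}$. For $n\geq 1$ and $0\le m\le n$, the $q$-Kaplansky number is $K_q(n,m)=\frac{1-q^{n+m}}{1-q^{n}}{n\brack m}$, a polynomial in $q$ of degree $m(n-m)+m$. *)

theory Defs
  imports "HOL-Computational_Algebra.Polynomial"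
begin

definition one_minus_qpow :: "nat \<Rightarrow> rat poly" where
  "one_minus_qpow k = 1 - monom 1 k"

text \<open>Gaussian polynomial [n choose m]_q = prod_{i<m} (1-q^(n-i))/(1-q^(m-i)),
  written as an (exact) quotient of polynomials.\<close>
definition gauss_poly :: "nat \<Rightarrow> nat \<Rightarrow> rat poly" where
  "gauss_poly n m =
     (\<Prod>i<m. one_minus_qpow (n - i)) div (\<Prod>i<m. one_minus_qpow (m - i))"

definition q_kaplansky :: "nat \<Rightarrow> nat \<Rightarrow> rat poly" where
  "q_kaplansky n m = (one_minus_qpow (n + m) * gauss_poly n m) div one_minus_qpow n"

end

theory Submission
  imports Defs "HOL-Library.Poly_Mapping"
begin

text \<open>Put \<open>r = n - m + 1\<close> (even) and \<open>k = m - 2\<close>. Then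
  \<open>K\<^sub>q(n, m) = [r + m, m]\<^sub>q - q\<^sup>r [r + k, k]\<^sub>q\<close>, and \<open>[r + k, k]\<^sub>q\<close> counts the monomials
  \<open>x\<^sub>0\<^bsup>a\<^sub>0\<^esup> \<cdots> x\<^sub>r\<^bsup>a\<^sub>r\<^esup>\<close> of degree \<open>k\<close> by their weight \<open>\<Sum> i a\<^sub>i\<close>. So the coefficient
  of \<open>q\<^sup>d\<close> is \<open>dim A\<^sub>d - dim B\<^sub>d\<close>, where \<open>A\<^sub>d\<close> is spanned by the monomials of degree \<open>m\<close> and
  weight \<open>d\<close>, and \<open>B\<^sub>d \<subseteq> A\<^sub>d\<close> by their multiples of the quadric \<open>Q = \<Sum> (-1)\<^sup>i x\<^sub>i x\<^bsub>r-i\<^esub>\<close>.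
  Symmetry comes from reversing exponent vectors. For unimodality, let \<open>sl\<^sub>2\<close> act on
  \<open>\<rat>[x\<^sub>0, \<dots>, x\<^sub>r]\<close> by derivations: \<open>[E, F]\<close> acts on \<open>A\<^sub>d\<close> as \<open>2d - rm\<close>, and \<open>Q\<close> is invariant,
  so the \<open>B\<^sub>d\<close> form a subrepresentation (\<open>r\<close> even makes \<open>Q \<noteq> 0\<close>, so that
  multiplication by \<open>Q\<close> preserves dimensions). Below the middle
  weight \<open>E\<close> is injective on \<open>A\<^sub>d\<close> modulo \<open>B\<^sub>d\<close>, whence
  \<open>dim A\<^sub>d - dim B\<^sub>d \<le> dim A\<^bsub>d+1\<^esub> - dim B\<^bsub>d+1\<^esub>\<close>.\<close>

section \<open>Polynomials in countably many variables as a rational vector space\<close>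

type_synonym monomial = "nat \<Rightarrow>\<^sub>0 nat"
type_synonym mpoly = "monomial \<Rightarrow>\<^sub>0 rat"

abbreviation lookup where "lookup \<equiv> Poly_Mapping.lookup"
abbreviation keys where "keys \<equiv> Poly_Mapping.keys"

definition mscale :: "rat \<Rightarrow> mpoly \<Rightarrow> mpoly" where
  "mscale c p = Poly_Mapping.single 0 c * p"

definition pm_monom :: "monomial \<Rightarrow> mpoly" where
  "pm_monom a = Poly_Mapping.single a 1"

definition unit_exp :: "nat \<Rightarrow> monomial" where
  "unit_exp i = Poly_Mapping.single i 1"

lemma vector_space_mscale: "vector_space mscale"
proof -
  have single_mult: "Poly_Mapping.single (0::monomial) (a * b) =
      Poly_Mapping.single 0 a * Poly_Mapping.single 0 b" for a b :: rat
    by (simp add: mult_single)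
  show ?thesis
    by unfold_locales (auto simp: mscale_def algebra_simps single_add single_mult mult.assoc)
qed

interpretation V: vector_space mscale by (rule vector_space_mscale)
interpretation VP: vector_space_pair mscale mscale by unfold_locales

abbreviation qlinear :: "(mpoly \<Rightarrow> mpoly) \<Rightarrow> bool" where
  "qlinear f \<equiv> Vector_Spaces.linear mscale mscale f"

lemma mscale_mult_left: "mscale c p * q = mscale c (p * q)"
  by (simp add: mscale_def mult.assoc)

lemma mscale_mult_right: "p * mscale c q = mscale c (p * q)"
  by (simp add: mscale_def mult.left_commute)

lemma lookup_mscale: "lookup (mscale c p) a = c * lookup p a"
  by (simp add: mscale_def mult_map_scale_conv_mult[symmetric] Poly_Mapping.map.rep_eq when_def)

lemma pm_monom_mult: "pm_monom a * pm_monom b = pm_monom (a + b)"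
  by (simp add: pm_monom_def mult_single)

lemma pm_monom_0: "pm_monom 0 = 1"
  by (simp add: pm_monom_def)

lemma lookup_pm_monom: "lookup (pm_monom a) b = (if a = b then 1 else 0)"
  by (simp add: pm_monom_def lookup_single when_def)

lemma inj_pm_monom: "inj pm_monom"
  by (rule injI) (metis lookup_pm_monom zero_neq_one)

lemma mpoly_expansion: "p = (\<Sum>a\<in>keys p. mscale (lookup p a) (pm_monom a))"
proof (rule poly_mapping_eqI)
  fix k
  have "lookup (\<Sum>a\<in>keys p. mscale (lookup p a) (pm_monom a)) k
      = (\<Sum>a\<in>keys p. if a = k then lookup p a else 0)"
    by (simp add: lookup_sum lookup_mscale lookup_pm_monom if_distrib cong: if_cong)
  also have "\<dots> = lookup p k"
    by (cases "k \<in> keys p") (simp_all add: in_keys_iff sum.delta)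
  finally show "lookup p k = lookup (\<Sum>a\<in>keys p. mscale (lookup p a) (pm_monom a)) k" by simp
qed

lemma span_pm_monom: "p \<in> V.span (range pm_monom)"
  by (subst mpoly_expansion) (intro V.span_sum V.span_scale V.span_base rangeI)

lemma independent_pm_monom: "V.independent (pm_monom ` S)"
  unfolding V.dependent_explicit
proof clarify
  fix t u v assume t: "finite t" "t \<subseteq> pm_monom ` S"
    and sum0: "(\<Sum>v\<in>t. mscale (u v) v) = 0" and v: "v \<in> t" "u v \<noteq> 0"
  obtain a where a: "v = pm_monom a" using t v by auto
  have "lookup (\<Sum>v\<in>t. mscale (u v) v) a = (\<Sum>w\<in>t. if w = v then u w else 0)"
    unfolding lookup_sum lookup_mscale
  proof (rule sum.cong[OF refl])
    fix w assume "w \<in> t"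
    then obtain b where b: "w = pm_monom b" using t by auto
    show "u w * lookup w a = (if w = v then u w else 0)"
      using a b inj_pm_monom by (auto simp: lookup_pm_monom inj_eq)
  qed
  also have "\<dots> = u v" using t v by (simp add: sum.delta')
  finally show False using sum0 v by simp
qed

lemma qlinearI:
  "(\<And>x y. f (x + y) = f x + f y) \<Longrightarrow> (\<And>c x. f (mscale c x) = mscale c (f x)) \<Longrightarrow> qlinear f"
  by (simp add: Vector_Spaces.linear_iff vector_space_mscale)

lemma qlinear_eq_on_monomials:
  "qlinear f \<Longrightarrow> qlinear g \<Longrightarrow> (\<And>a. f (pm_monom a) = g (pm_monom a)) \<Longrightarrow> f p = g p"
  by (rule VP.linear_eq_on[OF _ _ span_pm_monom]) auto

lemma qlinear_mult_left: "qlinear (\<lambda>p. c * p)"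
  by (rule qlinearI) (simp_all add: distrib_left mscale_mult_right)

lemma qlinear_image_span:
  assumes "qlinear f" and "\<And>b. b \<in> S \<Longrightarrow> f b \<in> V.span T" and "v \<in> V.span S"
  shows "f v \<in> V.span T"
proof -
  have "f v \<in> V.span (f ` S)" using VP.linear_span_image[OF assms(1)] assms(3) by blast
  also have "\<dots> \<subseteq> V.span T" using assms(2) by (simp add: V.span_minimal image_subset_iff)
  finally show ?thesis .
qed

definition pairing :: "(nat \<Rightarrow> 'a::comm_semiring_1) \<Rightarrow> monomial \<Rightarrow> 'a" where
  "pairing g a = (\<Sum>i\<in>keys a. g i * of_nat (lookup a i))"

abbreviation mdeg :: "monomial \<Rightarrow> nat" where
  "mdeg \<equiv> pairing (\<lambda>_. 1)"

abbreviation mweight :: "monomial \<Rightarrow> nat" where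
  "mweight \<equiv> pairing (\<lambda>i. i)"

lemma keys_add_monomial: "keys (a + b :: monomial) = keys a \<union> keys b"
  by (auto simp: in_keys_iff lookup_add)

lemma lookup_unit_exp: "lookup (unit_exp i) j = (if i = j then 1 else 0)"
  by (simp add: unit_exp_def lookup_single)

lemma keys_unit_exp [simp]: "keys (unit_exp i) = {i}"
  by (simp add: unit_exp_def)

lemma pairing_superset:
  "finite S \<Longrightarrow> keys a \<subseteq> S \<Longrightarrow> pairing g a = (\<Sum>i\<in>S. g i * of_nat (lookup a i))"
  unfolding pairing_def by (rule sum.mono_neutral_left) (auto simp: in_keys_iff)

lemma pairing_add: "pairing g (a + b) = pairing g a + pairing g b"
proof -
  let ?S = "keys a \<union> keys b"
  have "pairing g (a + b) = (\<Sum>i\<in>?S. g i * of_nat (lookup a i) + g i * of_nat (lookup b i))"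
    by (simp add: pairing_superset[of ?S] keys_add_monomial lookup_add algebra_simps)
  then show ?thesis
    by (simp add: sum.distrib pairing_superset[of ?S a] pairing_superset[of ?S b])
qed

lemma pairing_0 [simp]: "pairing g 0 = 0"
  by (simp add: pairing_def)

lemma pairing_unit_exp [simp]: "pairing g (unit_exp i) = g i"
  by (simp add: pairing_def lookup_unit_exp)

lemma mdeg_eq_0_iff: "mdeg a = 0 \<longleftrightarrow> a = 0"
  by (auto simp: pairing_def in_keys_iff poly_mapping_eq_iff fun_eq_iff)

lemma monomial_split: "i \<in> keys a \<Longrightarrow> a = (a - unit_exp i) + unit_exp i"
  by (rule poly_mapping_eqI) (auto simp: lookup_add lookup_minus lookup_unit_exp in_keys_iff)

lemma pairing_exchange:
  assumes "i \<in> keys a"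
  shows "pairing g (a - unit_exp i + unit_exp j) + g i = pairing g a + g j"
proof -
  have "pairing g a = pairing g (a - unit_exp i) + g i"
    by (subst monomial_split[OF assms]) (simp add: pairing_add)
  then show ?thesis by (simp add: pairing_add ac_simps)
qed

lemma keys_exchange: "keys (a - unit_exp i + unit_exp j) \<subseteq> keys a \<union> {j}"
  by (auto simp: in_keys_iff lookup_add lookup_minus lookup_unit_exp split: if_splits)

lemma mdeg_exchange: "i \<in> keys a \<Longrightarrow> mdeg (a - unit_exp i + unit_exp j) = mdeg a"
  using pairing_exchange[of i a "\<lambda>_. 1 :: nat" j] by simp

definition derivation :: "(mpoly \<Rightarrow> mpoly) \<Rightarrow> bool" where
  "derivation C \<longleftrightarrow> qlinear C \<and> (\<forall>p q. C (p * q) = C p * q + p * C q)"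

lemma derivation_mult: "derivation C \<Longrightarrow> C (p * q) = C p * q + p * C q"
  by (simp add: derivation_def)

lemma derivation_one: "derivation C \<Longrightarrow> C 1 = 0"
  using derivation_mult[of C 1 1] by simp

lemma derivation_mult_kernel: "derivation C \<Longrightarrow> C q = 0 \<Longrightarrow> C (q * p) = q * C p"
  by (simp add: derivation_mult)

lemma derivation_commutator:
  assumes "derivation C" and "derivation D"
  shows "derivation (\<lambda>p. C (D p) - D (C p))"
  using assms unfolding derivation_def
  by (auto intro!: qlinearI simp: VP.linear_add VP.linear_scale V.scale_right_diff_distrib algebra_simps)

lemma derivation_diagonal:
  assumes C: "derivation C" and vars: "\<And>i. C (pm_monom (unit_exp i)) = mscale (\<omega> i) (pm_monom (unit_exp i))"
  shows "C (pm_monom a) = mscale (pairing \<omega> a) (pm_monom a)"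
proof (induction "mdeg a" arbitrary: a)
  case 0
  then have "a = 0" using mdeg_eq_0_iff by metis
  then show ?case using derivation_one[OF C] by (simp add: pm_monom_0)
next
  case (Suc n)
  then obtain i where i: "i \<in> keys a" by (metis keys_eq_empty ex_in_conv pairing_0 nat.distinct(1))
  define b where "b = a - unit_exp i"
  have ab: "a = b + unit_exp i" using monomial_split[OF i] by (simp add: b_def)
  then have "mdeg b = n" using Suc(2) by (simp add: pairing_add)
  then have IH: "C (pm_monom b) = mscale (pairing \<omega> b) (pm_monom b)" using Suc(1) by simp
  have "C (pm_monom a) = C (pm_monom b) * pm_monom (unit_exp i) + pm_monom b * C (pm_monom (unit_exp i))"
    using derivation_mult[OF C] by (simp add: ab pm_monom_mult[symmetric])
  also have "\<dots> = mscale (pairing \<omega> b + \<omega> i) (pm_monom a)"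
    by (simp add: IH vars mscale_mult_left mscale_mult_right pm_monom_mult ab V.scale_left_distrib)
  finally show ?case by (simp add: ab pairing_add)
qed

text \<open>The derivation with \<open>x\<^sub>i \<mapsto> w i \<cdot> x\<^bsub>\<sigma> i\<^esub>\<close>, given by the Leibniz rule on monomials.\<close>

definition var_derivation_monom :: "(nat \<Rightarrow> nat) \<Rightarrow> (nat \<Rightarrow> rat) \<Rightarrow> monomial \<Rightarrow> mpoly" where
  "var_derivation_monom \<sigma> w a =
     (\<Sum>i\<in>keys a. mscale (of_nat (lookup a i) * w i) (pm_monom (a - unit_exp i + unit_exp (\<sigma> i))))"

definition var_derivation :: "(nat \<Rightarrow> nat) \<Rightarrow> (nat \<Rightarrow> rat) \<Rightarrow> mpoly \<Rightarrow> mpoly" where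
  "var_derivation \<sigma> w = VP.construct (range pm_monom) (\<lambda>p. var_derivation_monom \<sigma> w (inv pm_monom p))"

lemma qlinear_var_derivation: "qlinear (var_derivation \<sigma> w)"
  unfolding var_derivation_def by (rule VP.linear_construct) (simp add: independent_pm_monom)

lemma var_derivation_pm_monom: "var_derivation \<sigma> w (pm_monom a) = var_derivation_monom \<sigma> w a"
  unfolding var_derivation_def
  by (subst VP.construct_basis) (simp_all add: independent_pm_monom inj_pm_monom)

lemma var_derivation_var:
  "var_derivation \<sigma> w (pm_monom (unit_exp i)) = mscale (w i) (pm_monom (unit_exp (\<sigma> i)))"
  by (simp add: var_derivation_pm_monom var_derivation_monom_def lookup_unit_exp)

lemma var_derivation_monom_superset:
  "finite S \<Longrightarrow> keys a \<subseteq> S \<Longrightarrow> var_derivation_monom \<sigma> w a =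
     (\<Sum>i\<in>S. mscale (of_nat (lookup a i) * w i) (pm_monom (a - unit_exp i + unit_exp (\<sigma> i))))"
  unfolding var_derivation_monom_def by (rule sum.mono_neutral_left) (auto simp: in_keys_iff)

lemma var_derivation_monom_add:
  "var_derivation_monom \<sigma> w (a + b) =
     var_derivation_monom \<sigma> w a * pm_monom b + pm_monom a * var_derivation_monom \<sigma> w b"
proof -
  let ?S = "keys a \<union> keys b"
  let ?D = "\<lambda>a. var_derivation_monom \<sigma> w a"
  let ?t = "\<lambda>a i. of_nat (lookup a i) * w i"
  let ?shift = "\<lambda>a i. a - unit_exp i + unit_exp (\<sigma> i)"
  have fin: "finite ?S" by simp
  have shift: "lookup a i \<noteq> 0 \<Longrightarrow> a + c - unit_exp i + unit_exp j = (a - unit_exp i + unit_exp j) + c"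
    for a c :: monomial and i j
    by (rule poly_mapping_eqI) (auto simp: lookup_add lookup_minus lookup_unit_exp)
  have pm_monom_mult': "pm_monom a * pm_monom c = pm_monom (c + a)" for a c
    by (simp add: pm_monom_mult add.commute)
  have "?D (a + b) = (\<Sum>i\<in>?S. mscale (?t a i) (pm_monom (a + b - unit_exp i + unit_exp (\<sigma> i))))
                + (\<Sum>i\<in>?S. mscale (?t b i) (pm_monom (b + a - unit_exp i + unit_exp (\<sigma> i))))"
    by (simp add: var_derivation_monom_superset[OF fin] keys_add_monomial lookup_add algebra_simps
        sum.distrib V.scale_left_distrib add.commute)
  also have "(\<Sum>i\<in>?S. mscale (?t a i) (pm_monom (a + b - unit_exp i + unit_exp (\<sigma> i))))
      = (\<Sum>i\<in>?S. mscale (?t a i) (pm_monom (?shift a i))) * pm_monom b"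
    unfolding sum_distrib_right
    by (rule sum.cong[OF refl]) (case_tac "lookup a x = 0", simp_all add: mscale_mult_left pm_monom_mult shift)
  also have "(\<Sum>i\<in>?S. mscale (?t b i) (pm_monom (b + a - unit_exp i + unit_exp (\<sigma> i))))
      = pm_monom a * (\<Sum>i\<in>?S. mscale (?t b i) (pm_monom (?shift b i)))"
    unfolding sum_distrib_left
    by (rule sum.cong[OF refl])
      (case_tac "lookup b x = 0", simp_all add: mscale_mult_right pm_monom_mult' shift)
  finally show ?thesis
    using var_derivation_monom_superset[OF fin, of a] var_derivation_monom_superset[OF fin, of b] by simp
qed

lemma derivation_var_derivation: "derivation (var_derivation \<sigma> w)"
proof -
  let ?D = "var_derivation \<sigma> w"
  have L: "qlinear ?D" by (rule qlinear_var_derivation)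
  have on_monomial: "?D (p * pm_monom b) = ?D p * pm_monom b + p * ?D (pm_monom b)" for p b
    by (rule qlinear_eq_on_monomials[where f="\<lambda>p. ?D (p * pm_monom b)"])
      (auto intro!: qlinearI simp: distrib_right mscale_mult_left VP.linear_add[OF L]
        VP.linear_scale[OF L] V.scale_right_distrib pm_monom_mult var_derivation_pm_monom
        var_derivation_monom_add)
  have "?D (p * q) = ?D p * q + p * ?D q" for p q
    by (rule qlinear_eq_on_monomials[where f="\<lambda>q. ?D (p * q)"])
      (auto intro!: qlinearI simp: distrib_left mscale_mult_right VP.linear_add[OF L]
        VP.linear_scale[OF L] V.scale_right_distrib on_monomial)
  then show ?thesis using L by (simp add: derivation_def)
qed

lemma var_derivation_monom_in_span:
  "(\<And>i. i \<in> keys a \<Longrightarrow> w i \<noteq> 0 \<Longrightarrow> a - unit_exp i + unit_exp (\<sigma> i) \<in> S) \<Longrightarrow>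
     var_derivation \<sigma> w (pm_monom a) \<in> V.span (pm_monom ` S)"
  unfolding var_derivation_pm_monom var_derivation_monom_def
  by (rule V.span_sum) (metis V.scale_eq_0_iff V.span_base V.span_scale V.span_zero imageI mult_eq_0_iff)

section \<open>An action of sl(2) and its invariant quadric\<close>

lemma var_derivation_quadratic:
  "var_derivation \<sigma> w (pm_monom (unit_exp i + unit_exp j)) =
     mscale (w i) (pm_monom (unit_exp (\<sigma> i) + unit_exp j)) +
     mscale (w j) (pm_monom (unit_exp i + unit_exp (\<sigma> j)))"
  using derivation_mult[OF derivation_var_derivation, of \<sigma> w "pm_monom (unit_exp i)" "pm_monom (unit_exp j)"]
  by (simp add: pm_monom_mult var_derivation_var mscale_mult_left mscale_mult_right)

text \<open>The action of \<open>sl\<^sub>2\<close> on \<open>\<rat>[x\<^sub>0, \<dots>, x\<^sub>r]\<close> induced from its action on binary forms of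
  degree \<open>r\<close>, in a basis where the raising operator sends \<open>x\<^sub>i\<close> to \<open>(i + 1)(r - i) x\<^bsub>i+1\<^esub>\<close>
  and the lowering operator sends \<open>x\<^sub>i\<close> to \<open>x\<^bsub>i-1\<^esub>\<close> (and \<open>x\<^sub>0\<close> to \<open>0\<close>).\<close>

definition raise_coeff :: "nat \<Rightarrow> nat \<Rightarrow> rat" where
  "raise_coeff r i = of_nat (Suc i) * (of_nat r - of_nat i)"

definition lower_coeff :: "nat \<Rightarrow> rat" where
  "lower_coeff i = (if i = 0 then 0 else 1)"

definition raise_op :: "nat \<Rightarrow> mpoly \<Rightarrow> mpoly" where
  "raise_op r = var_derivation Suc (raise_coeff r)"

definition lower_op :: "mpoly \<Rightarrow> mpoly" where
  "lower_op = var_derivation (\<lambda>i. i - 1) lower_coeff"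

lemma qlinear_raise_op: "qlinear (raise_op r)"
  by (simp add: raise_op_def qlinear_var_derivation)

lemma qlinear_lower_op: "qlinear lower_op"
  by (simp add: lower_op_def qlinear_var_derivation)

lemma derivation_raise_op: "derivation (raise_op r)"
  by (simp add: raise_op_def derivation_var_derivation)

lemma derivation_lower_op: "derivation lower_op"
  by (simp add: lower_op_def derivation_var_derivation)

lemma raise_lower_commutator_var:
  "raise_op r (lower_op (pm_monom (unit_exp i))) - lower_op (raise_op r (pm_monom (unit_exp i)))
     = mscale (2 * of_nat i - of_nat r) (pm_monom (unit_exp i))"
proof (cases i)
  case 0
  then show ?thesis
    by (simp add: raise_op_def lower_op_def var_derivation_var VP.linear_scale[OF qlinear_var_derivation]
        VP.linear_0[OF qlinear_var_derivation] lower_coeff_def raise_coeff_def)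
next
  case (Suc j)
  then show ?thesis
    by (simp add: raise_op_def lower_op_def var_derivation_var VP.linear_scale[OF qlinear_var_derivation]
        lower_coeff_def raise_coeff_def V.scale_left_diff_distrib[symmetric]) (simp add: algebra_simps)
qed

lemma raise_lower_commutator:
  "raise_op r (lower_op (pm_monom a)) - lower_op (raise_op r (pm_monom a))
     = mscale (2 * of_nat (mweight a) - of_nat r * of_nat (mdeg a)) (pm_monom a)"
proof -
  have "pairing (\<lambda>i. 2 * of_nat i - of_nat r) a = (2 * of_nat (mweight a) - of_nat r * of_nat (mdeg a) :: rat)"
    by (simp add: pairing_def algebra_simps sum_subtractf sum_distrib_left)
  then show ?thesis
    using derivation_diagonal[OF derivation_commutator[OF derivation_raise_op derivation_lower_op]
        raise_lower_commutator_var, of r a] by simp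
qed

text \<open>The invariant quadratic form of binary forms of degree \<open>r\<close>; for odd \<open>r\<close> it vanishes
  identically.\<close>

definition quadric :: "nat \<Rightarrow> mpoly" where
  "quadric r = (\<Sum>i\<le>r. mscale ((-1)^i) (pm_monom (unit_exp i + unit_exp (r - i))))"

lemma raise_op_quadric: "raise_op r (quadric r) = 0"
proof (cases r)
  case 0
  then show ?thesis
    by (simp add: quadric_def raise_op_def var_derivation_quadratic raise_coeff_def
        VP.linear_scale[OF qlinear_var_derivation])
next
  case (Suc s)
  let ?f = "\<lambda>i. mscale ((-1)^i) (mscale (raise_coeff r i) (pm_monom (unit_exp (Suc i) + unit_exp (r - i))))"
  let ?g = "\<lambda>i. mscale ((-1)^i) (mscale (raise_coeff r (r - i)) (pm_monom (unit_exp i + unit_exp (Suc (r - i)))))"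
  have "raise_op r (quadric r) = (\<Sum>i\<le>r. ?f i) + (\<Sum>i\<le>r. ?g i)"
    by (simp add: quadric_def raise_op_def VP.linear_sum[OF qlinear_var_derivation]
        VP.linear_scale[OF qlinear_var_derivation] var_derivation_quadratic V.scale_right_distrib sum.distrib)
  also have "(\<Sum>i\<le>r. ?f i) = (\<Sum>i\<le>s. ?f i)"
    using Suc by (simp add: raise_coeff_def)
  also have "(\<Sum>i\<le>r. ?g i) = (\<Sum>i\<le>s. ?g (Suc i))"
    using Suc by (simp add: sum.atMost_Suc_shift raise_coeff_def del: sum.atMost_Suc)
  also have "(\<Sum>i\<le>s. ?g (Suc i)) = - (\<Sum>i\<le>s. ?f i)"
    unfolding sum_negf[symmetric]
  proof (rule sum.cong[OF refl])
    fix i assume "i \<in> {..s}"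
    then have "Suc (r - Suc i) = r - i" "raise_coeff r (r - Suc i) = raise_coeff r i"
      using Suc by (simp_all add: raise_coeff_def of_nat_diff algebra_simps)
    then show "?g (Suc i) = - ?f i" by (simp add: V.scale_scale add.commute)
  qed
  finally show ?thesis by simp
qed

lemma lower_op_quadric: "lower_op (quadric r) = 0"
proof (cases r)
  case 0
  then show ?thesis
    by (simp add: quadric_def lower_op_def var_derivation_quadratic lower_coeff_def
        VP.linear_scale[OF qlinear_var_derivation])
next
  case (Suc s)
  let ?f = "\<lambda>i. mscale ((-1)^i) (mscale (lower_coeff i) (pm_monom (unit_exp (i - 1) + unit_exp (r - i))))"
  let ?g = "\<lambda>i. mscale ((-1)^i) (mscale (lower_coeff (r - i)) (pm_monom (unit_exp i + unit_exp (r - i - 1))))"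
  have "lower_op (quadric r) = (\<Sum>i\<le>r. ?f i) + (\<Sum>i\<le>r. ?g i)"
    by (simp add: quadric_def lower_op_def VP.linear_sum[OF qlinear_var_derivation]
        VP.linear_scale[OF qlinear_var_derivation] var_derivation_quadratic V.scale_right_distrib sum.distrib)
  also have "(\<Sum>i\<le>r. ?f i) = (\<Sum>i\<le>s. ?f (Suc i))"
    using Suc by (simp add: sum.atMost_Suc_shift lower_coeff_def del: sum.atMost_Suc)
  also have "(\<Sum>i\<le>r. ?g i) = (\<Sum>i\<le>s. ?g i)"
    using Suc by (simp add: lower_coeff_def)
  also have "(\<Sum>i\<le>s. ?f (Suc i)) = - (\<Sum>i\<le>s. ?g i)"
    unfolding sum_negf[symmetric]
  proof (rule sum.cong[OF refl])
    fix i assume "i \<in> {..s}"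
    then have "lower_coeff (r - i) = 1" "lower_coeff (Suc i) = 1"
      using Suc by (simp_all add: lower_coeff_def)
    then show "?f (Suc i) = - ?g i" by (simp add: V.scale_scale)
  qed
  finally show ?thesis by simp
qed

lemma quadric_nonzero:
  assumes "even r" "r \<noteq> 0"
  shows "quadric r \<noteq> 0"
proof -
  have monomial_eq: "unit_exp i + unit_exp (r - i) = unit_exp 0 + unit_exp r \<longleftrightarrow> i = 0 \<or> i = r"
    if "i \<le> r" for i
  proof
    assume "unit_exp i + unit_exp (r - i) = unit_exp 0 + unit_exp r"
    then have "lookup (unit_exp i + unit_exp (r - i)) 0 = lookup (unit_exp 0 + unit_exp r) 0" by simp
    then show "i = 0 \<or> i = r" using assms that by (auto simp: lookup_add lookup_unit_exp split: if_splits)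
  qed (auto simp: add.commute)
  have "lookup (quadric r) (unit_exp 0 + unit_exp r) = (\<Sum>i\<le>r. (-1)^i * (if i = 0 \<or> i = r then 1 else 0))"
    unfolding quadric_def lookup_sum lookup_mscale lookup_pm_monom
    by (rule sum.cong[OF refl]) (simp add: monomial_eq)
  also have "\<dots> = (\<Sum>i\<in>{0, r}. (-1)^i)"
    by (rule sum.mono_neutral_cong_right) auto
  also have "\<dots> = 2" using assms by simp
  finally show ?thesis by auto
qed

section \<open>Raising operators modulo a subrepresentation\<close>

text \<open>\<open>A d\<close> models the weight-\<open>d\<close> space of an \<open>sl\<^sub>2\<close>-module and \<open>B\<close> a subrepresentation.\<close>

locale graded_sl2_pair =
  fixes E F :: "mpoly \<Rightarrow> mpoly" and A B :: "nat \<Rightarrow> mpoly set" and N :: nat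
  assumes linear_E: "qlinear E" and linear_F: "qlinear F"
    and subspace_A: "\<And>d. V.subspace (A d)" and subspace_B: "\<And>d. V.subspace (B d)"
    and E_A: "\<And>d v. v \<in> A d \<Longrightarrow> E v \<in> A (Suc d)"
    and F_A: "\<And>d v. v \<in> A (Suc d) \<Longrightarrow> F v \<in> A d"
    and F_A0: "\<And>v. v \<in> A 0 \<Longrightarrow> F v = 0"
    and E_B: "\<And>d v. v \<in> B d \<Longrightarrow> E v \<in> B (Suc d)"
    and F_B: "\<And>d v. v \<in> B (Suc d) \<Longrightarrow> F v \<in> B d"
    and commutator: "\<And>d v. v \<in> A d \<Longrightarrow> E (F v) - F (E v) = mscale (2 * of_nat d - of_nat N) v"
begin

lemma F_power_A: "v \<in> A d \<Longrightarrow> j \<le> d \<Longrightarrow> (F ^^ j) v \<in> A (d - j)"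
proof (induction j)
  case (Suc j)
  then have "(F ^^ j) v \<in> A (Suc (d - Suc j))" by (simp add: Suc_diff_Suc)
  then show ?case by (simp add: F_A)
qed simp

lemma F_power_B: "v \<in> B (d + j) \<Longrightarrow> (F ^^ j) v \<in> B d"
  by (induction j arbitrary: v) (simp_all add: F_B funpow_Suc_right del: funpow.simps)

lemma power_commutator:
  assumes v: "v \<in> A d" and j: "j \<le> d"
  shows "E ((F ^^ Suc j) v) - (F ^^ Suc j) (E v)
         = mscale (of_nat (Suc j) * ((2 * of_nat d - of_nat N) - of_nat j)) ((F ^^ j) v)"
  using j
proof (induction j)
  case 0 then show ?case using commutator[OF v] by simp
next
  case (Suc j)
  let ?l = "2 * of_nat d - of_nat N :: rat"
  let ?u = "(F ^^ Suc j) v"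
  have u: "?u \<in> A (d - Suc j)" using F_power_A[OF v Suc(2)] .
  have IH: "E ?u = (F ^^ Suc j) (E v) + mscale (of_nat (Suc j) * (?l - of_nat j)) ((F ^^ j) v)"
    using Suc by (simp add: algebra_simps)
  have coeff: "of_nat (Suc j) * (?l - of_nat j) + (2 * of_nat (d - Suc j) - of_nat N)
      = of_nat (Suc (Suc j)) * (?l - of_nat (Suc j))"
    using Suc(2) by (simp add: of_nat_diff algebra_simps)
  have "E (F ?u) = F (E ?u) + mscale (2 * of_nat (d - Suc j) - of_nat N) ?u"
    using commutator[OF u] by (simp add: algebra_simps)
  also have "\<dots> = F ((F ^^ Suc j) (E v)) + mscale (of_nat (Suc j) * (?l - of_nat j)) ?u
        + mscale (2 * of_nat (d - Suc j) - of_nat N) ?u"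
    unfolding IH by (simp add: VP.linear_add[OF linear_F] VP.linear_scale[OF linear_F])
  also have "\<dots> = F ((F ^^ Suc j) (E v)) + mscale (of_nat (Suc (Suc j)) * (?l - of_nat (Suc j))) ?u"
    by (simp only: add.assoc V.scale_left_distrib[symmetric] coeff)
  finally show ?case by simp
qed

lemma raise_reflects_B:
  assumes below_middle: "2 * d < N" and v: "v \<in> A d" and Ev: "E v \<in> B (Suc d)"
  shows "v \<in> B d"
proof -
  let ?l = "2 * of_nat d - of_nat N :: rat"
  have nonzero: "of_nat (Suc j) * (?l - of_nat j) \<noteq> 0" for j :: nat
    using below_middle by (auto simp: mult_eq_0_iff)
  have step: "(F ^^ j) v \<in> B i" if "j \<le> d" "j + i = d" "E ((F ^^ Suc j) v) \<in> B i" for i j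
  proof -
    have "(F ^^ Suc j) (E v) \<in> B i"
      by (rule F_power_B) (use Ev that in \<open>simp add: add.commute\<close>)
    then have "E ((F ^^ Suc j) v) - (F ^^ Suc j) (E v) \<in> B i"
      using that subspace_B V.subspace_diff by blast
    then have "mscale (of_nat (Suc j) * (?l - of_nat j)) ((F ^^ j) v) \<in> B i"
      using power_commutator[OF v that(1)] by simp
    then have "mscale (inverse (of_nat (Suc j) * (?l - of_nat j)))
        (mscale (of_nat (Suc j) * (?l - of_nat j)) ((F ^^ j) v)) \<in> B i"
      using subspace_B V.subspace_scale by blast
    moreover have "inverse (of_nat (Suc j) * (?l - of_nat j)) * (of_nat (Suc j) * (?l - of_nat j)) = 1"
      using nonzero[of j] by (rule left_inverse)
    ultimately show ?thesis by (simp only: V.scale_scale V.scale_one)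
  qed
  \<comment> \<open>Induction on \<open>i\<close>, starting from \<open>F\<^bsup>d+1\<^esup> v = 0\<close> since weights are nonnegative.\<close>
  have "(F ^^ (d - i)) v \<in> B i" if "i \<le> d" for i
    using that
  proof (induction i)
    case 0
    have "(F ^^ d) v \<in> A 0" using F_power_A[OF v, of d] by simp
    then have "(F ^^ Suc d) v = 0" using F_A0 by simp
    then have "E ((F ^^ Suc d) v) \<in> B 0"
      using VP.linear_0[OF linear_E] subspace_B V.subspace_0 by simp
    then show ?case using step[of d 0] by simp
  next
    case (Suc i)
    then have "E ((F ^^ Suc (d - Suc i)) v) \<in> B (Suc i)" using E_B by (simp add: Suc_diff_Suc)
    then show ?case using step[of "d - Suc i" "Suc i"] Suc(2) by simp
  qed
  then show ?thesis by (metis diff_self_eq_0 funpow_0 le_refl)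
qed

end

text \<open>If \<open>E\<close> maps \<open>span SA0\<close> into \<open>span SA1\<close> and is injective modulo the subspaces spanned by
  \<open>SB0 \<subseteq> span SA0\<close> and \<open>SB1 \<subseteq> span SA1\<close>, then the quotient dimension does not drop:
  a complement \<open>C\<close> of \<open>SB0\<close> in a basis of \<open>span SA0\<close> is mapped to vectors independent
  from each other and from \<open>SB1\<close>.\<close>

lemma card_le_of_injective_modulo:
  assumes linear_E: "qlinear E"
    and fin: "finite SA0" "finite SA1" "finite SB0" "finite SB1"
    and ind: "V.independent SA0" "V.independent SA1" "V.independent SB0" "V.independent SB1"
    and B0_A0: "SB0 \<subseteq> V.span SA0" and B1_A1: "SB1 \<subseteq> V.span SA1"
    and E_A: "\<And>v. v \<in> V.span SA0 \<Longrightarrow> E v \<in> V.span SA1"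
    and injective: "\<And>v. v \<in> V.span SA0 \<Longrightarrow> E v \<in> V.span SB1 \<Longrightarrow> v \<in> V.span SB0"
  shows "card SA0 + card SB1 \<le> card SA1 + card SB0"
proof -
  obtain T where T: "SB0 \<subseteq> T" "T \<subseteq> V.span SA0" "V.independent T" "V.span SA0 \<subseteq> V.span T"
    using V.maximal_independent_subset_extend[OF B0_A0 ind(3)] by blast
  have fin_T: "finite T" and card_T_le: "card T \<le> card SA0"
    using V.independent_span_bound[OF fin(1) T(3) T(2)] by auto
  have "SA0 \<subseteq> V.span T" using T(4) V.span_superset[of SA0] by blast
  then have card_T_ge: "card SA0 \<le> card T" using V.independent_span_bound[OF fin_T ind(1)] by blast
  define C where "C = T - SB0"
  have fin_C: "finite C" using fin_T by (simp add: C_def)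
  have card_C: "card C = card T - card SB0" using T(1) fin_T by (simp add: C_def card_Diff_subset fin(3))
  have card_SB0: "card SB0 \<le> card T" using T(1) fin_T by (simp add: card_mono)
  have span_T: "V.span T \<subseteq> V.span SA0"
    using V.span_mono[OF T(2)] by (simp add: V.span_span)
  have image_independent: "V.independent (E ` C' \<union> SB1) \<and> card (E ` C' \<union> SB1) = card C' + card SB1"
    if "C' \<subseteq> C" for C'
    using finite_subset[OF that fin_C] that
  proof (induction C' rule: finite_subset_induct')
    case empty
    show ?case using ind(4) by simp
  next
    case (insert c C')
    have not_in_span: "E c \<notin> V.span (E ` C' \<union> SB1)"
    proof
      assume "E c \<in> V.span (E ` C' \<union> SB1)"
      then obtain x y where xy: "E c = x + y" "x \<in> V.span (E ` C')" "y \<in> V.span SB1"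
        unfolding V.span_Un by blast
      obtain u where u: "u \<in> V.span C'" "x = E u"
        using xy(2) VP.linear_span_image[OF linear_E, of C'] by auto
      have c: "c \<in> T" "c \<notin> SB0" using insert.hyps(2) by (auto simp: C_def)
      have C'_T: "C' \<subseteq> T - {c}" using insert.hyps(3,4) by (auto simp: C_def)
      have "u \<in> V.span SA0" using u(1) V.span_mono[of C' T] span_T C'_T by blast
      moreover have "c \<in> V.span SA0" using c T(2) by auto
      moreover have "E (c - u) = y" using xy u by (simp add: VP.linear_diff[OF linear_E])
      ultimately have "c - u \<in> V.span SB0"
        using injective[of "c - u"] V.span_diff xy(3) by simp
      then have "c - u \<in> V.span (T - {c})"
        using V.span_mono[of SB0 "T - {c}"] T(1) c by auto
      moreover have "u \<in> V.span (T - {c})"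
        using u(1) V.span_mono[OF C'_T] by blast
      ultimately have "(c - u) + u \<in> V.span (T - {c})" by (rule V.span_add)
      then have "V.dependent T" using c(1) unfolding V.dependent_def by auto
      then show False using T(3) by simp
    qed
    have "E c \<notin> E ` C' \<union> SB1" using not_in_span V.span_superset[of "E ` C' \<union> SB1"] by blast
    then show ?case
      using insert.IH V.independent_insertI[OF not_in_span] insert.hyps(1,4) fin(4) by simp
  qed
  have "E ` C \<union> SB1 \<subseteq> V.span SA1"
    using E_A T(2) B1_A1 by (auto simp: C_def)
  then have "card (E ` C \<union> SB1) \<le> card SA1"
    using V.independent_span_bound[OF fin(2)] image_independent[OF order_refl] by blast
  then show ?thesis using image_independent[OF order_refl] card_C card_T_le card_T_ge card_SB0 by linarith
qed

section \<open>Partitions in a box and Gaussian polynomials\<close>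

definition list_weight :: "nat list \<Rightarrow> nat" where
  "list_weight xs = (\<Sum>i<length xs. i * xs ! i)"

definition exp_lists :: "nat \<Rightarrow> nat \<Rightarrow> nat \<Rightarrow> nat list set" where
  "exp_lists r k d = {xs. length xs = Suc r \<and> sum_list xs = k \<and> list_weight xs = d}"

text \<open>The number of partitions of \<open>d\<close> into at most \<open>k\<close> parts of size at most \<open>r\<close>, counted
  through the multiplicities \<open>xs ! i\<close> of the part sizes \<open>i \<le> r\<close> (with parts of size \<open>0\<close> filling
  up to exactly \<open>k\<close>).\<close>

definition box_count :: "nat \<Rightarrow> nat \<Rightarrow> nat \<Rightarrow> nat" where
  "box_count r k d = card (exp_lists r k d)"

lemma finite_exp_lists: "finite (exp_lists r k d)"
proof (rule finite_subset)
  show "exp_lists r k d \<subseteq> {xs. set xs \<subseteq> {0..k} \<and> length xs = Suc r}"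
    by (auto simp: exp_lists_def member_le_sum_list)
qed (rule finite_lists_length_eq, simp)

lemma list_weight_Cons: "list_weight (x # ys) = list_weight ys + sum_list ys"
proof -
  have "list_weight (x # ys) = (\<Sum>i<length ys. Suc i * ys ! i)"
    by (simp add: list_weight_def sum.lessThan_Suc_shift del: sum.lessThan_Suc)
  also have "\<dots> = list_weight ys + (\<Sum>i<length ys. ys ! i)"
    by (simp add: list_weight_def sum.distrib)
  finally show ?thesis by (simp add: sum_list_sum_nth atLeast0LessThan)
qed

lemma list_weight_le: "length xs = Suc r \<Longrightarrow> list_weight xs \<le> r * sum_list xs"
proof -
  assume l: "length xs = Suc r"
  have "list_weight xs \<le> (\<Sum>i<length xs. r * xs ! i)"
    unfolding list_weight_def by (rule sum_mono) (use l in auto)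
  also have "\<dots> = r * sum_list xs"
    by (simp add: sum_distrib_left[symmetric] sum_list_sum_nth atLeast0LessThan)
  finally show ?thesis .
qed

lemma list_weight_rev: "length xs = Suc r \<Longrightarrow> list_weight xs + list_weight (rev xs) = r * sum_list xs"
proof -
  assume l: "length xs = Suc r"
  have "list_weight (rev xs) = (\<Sum>i<Suc r. i * xs ! (Suc r - Suc i))"
    using l by (simp add: list_weight_def rev_nth)
  also have "\<dots> = (\<Sum>i<Suc r. (r - i) * xs ! i)"
    using sum.nat_diff_reindex[of "\<lambda>i. i * xs ! (Suc r - Suc i)" "Suc r"]
    by (simp add: sum.nat_diff_reindex[where g="\<lambda>i. (r - i) * xs ! i", symmetric])
  finally have "list_weight xs + list_weight (rev xs) = (\<Sum>i<Suc r. i * xs ! i + (r - i) * xs ! i)"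
    using l by (simp add: list_weight_def sum.distrib)
  also have "\<dots> = (\<Sum>i<Suc r. r * xs ! i)"
    by (rule sum.cong) (auto simp: add_mult_distrib[symmetric])
  also have "\<dots> = r * sum_list xs"
    using l by (simp add: sum_distrib_left[symmetric] sum_list_sum_nth atLeast0LessThan)
  finally show ?thesis .
qed

lemma box_count_eq_0: "r * k < d \<Longrightarrow> box_count r k d = 0"
proof -
  assume "r * k < d"
  then have "exp_lists r k d = {}" using list_weight_le by (fastforce simp: exp_lists_def)
  then show ?thesis by (simp add: box_count_def)
qed

lemma box_count_symmetric: "d \<le> r * k \<Longrightarrow> box_count r k d = box_count r k (r * k - d)"
  unfolding box_count_def
proof (rule bij_betw_same_card[of rev], rule bij_betw_byWitness[where f'=rev])
  assume d: "d \<le> r * k"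
  show "rev ` exp_lists r k d \<subseteq> exp_lists r k (r * k - d)"
    using list_weight_rev by (fastforce simp: exp_lists_def)
  show "rev ` exp_lists r k (r * k - d) \<subseteq> exp_lists r k d"
    using list_weight_rev[of _ r] d by (fastforce simp: exp_lists_def)
qed auto

lemma box_count_0_left: "box_count 0 k d = (if d = 0 then 1 else 0)"
proof -
  have "exp_lists 0 k d = (if d = 0 then {[k]} else {})"
    by (auto simp: exp_lists_def list_weight_def length_Suc_conv)
  then show ?thesis by (simp add: box_count_def)
qed

lemma box_count_0_middle: "box_count r 0 d = (if d = 0 then 1 else 0)"
proof -
  have "xs = replicate (Suc r) 0" if "length xs = Suc r" "sum_list xs = 0" for xs :: "nat list"
    using that by (metis in_set_replicate sum_list_eq_0_iff replicate_length_same)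
  moreover have "list_weight (replicate (Suc r) 0) = 0"
    by (auto simp: list_weight_def simp del: replicate_Suc intro!: sum.neutral)
  ultimately have "exp_lists r 0 d = (if d = 0 then {replicate (Suc r) 0} else {})"
    by (auto simp: exp_lists_def)
  then show ?thesis by (simp add: box_count_def)
qed

text \<open>Split according to whether the first multiplicity is positive (remove one part of size
  \<open>0\<close>) or zero (drop it, which lowers every part size by one).\<close>

lemma box_count_Suc_Suc:
  "box_count (Suc r) (Suc k) d =
     box_count (Suc r) k d + (if Suc k \<le> d then box_count r (Suc k) (d - Suc k) else 0)"
proof -
  let ?S1 = "{xs \<in> exp_lists (Suc r) (Suc k) d. hd xs \<noteq> 0}"
  let ?S0 = "{xs \<in> exp_lists (Suc r) (Suc k) d. hd xs = 0}"
  have "bij_betw (\<lambda>xs. (hd xs - 1) # tl xs) ?S1 (exp_lists (Suc r) k d)"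
    by (rule bij_betw_byWitness[where f'="\<lambda>xs. Suc (hd xs) # tl xs"])
      (auto simp: exp_lists_def length_Suc_conv list_weight_Cons)
  then have card_S1: "card ?S1 = box_count (Suc r) k d"
    unfolding box_count_def by (rule bij_betw_same_card)
  have card_S0: "card ?S0 = (if Suc k \<le> d then box_count r (Suc k) (d - Suc k) else 0)"
  proof (cases "Suc k \<le> d")
    case True
    have "bij_betw tl ?S0 (exp_lists r (Suc k) (d - Suc k))"
      by (rule bij_betw_byWitness[where f'="\<lambda>xs. 0 # xs"])
        (use True in \<open>auto simp: exp_lists_def length_Suc_conv list_weight_Cons\<close>)
    then show ?thesis using True unfolding box_count_def by (simp add: bij_betw_same_card)
  next
    case False
    then have "?S0 = {}" by (auto simp: exp_lists_def length_Suc_conv list_weight_Cons)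
    with False show ?thesis by (simp only: card.empty if_False)
  qed
  have "exp_lists (Suc r) (Suc k) d = ?S1 \<union> ?S0" by auto
  then have "box_count (Suc r) (Suc k) d = card ?S1 + card ?S0"
    unfolding box_count_def by (metis (no_types, lifting) card_Un_disjoint disjoint_iff finite_Un
        finite_exp_lists mem_Collect_eq)
  then show ?thesis using card_S1 card_S0 by simp
qed

definition box_poly :: "nat \<Rightarrow> nat \<Rightarrow> rat poly" where
  "box_poly r k = (\<Sum>d\<le>r * k. monom (of_nat (box_count r k d)) d)"

definition qfact :: "nat \<Rightarrow> rat poly" where
  "qfact k = (\<Prod>i<k. one_minus_qpow (k - i))"

definition qfalling :: "nat \<Rightarrow> nat \<Rightarrow> rat poly" where
  "qfalling N k = (\<Prod>i<k. one_minus_qpow (N - i))"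

lemma coeff_box_poly: "coeff (box_poly r k) d = of_nat (box_count r k d)"
proof -
  have "coeff (box_poly r k) d = (\<Sum>j\<le>r * k. if j = d then of_nat (box_count r k j) else 0)"
    by (simp add: box_poly_def coeff_sum)
  also have "\<dots> = (if d \<le> r * k then of_nat (box_count r k d) else 0)"
    by (simp add: sum.delta)
  finally show ?thesis using box_count_eq_0[of r k d] by auto
qed

lemma box_poly_Suc_Suc:
  "box_poly (Suc r) (Suc k) = box_poly (Suc r) k + monom 1 (Suc k) * box_poly r (Suc k)"
  by (rule poly_eqI) (simp add: coeff_box_poly coeff_monom_mult box_count_Suc_Suc not_less)

lemma box_poly_0_left: "box_poly 0 k = 1"
  by (rule poly_eqI) (simp add: coeff_box_poly box_count_0_left coeff_1)

lemma box_poly_0_right: "box_poly r 0 = 1"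
  by (rule poly_eqI) (simp add: coeff_box_poly box_count_0_middle coeff_1)

lemma qfact_Suc: "qfact (Suc k) = one_minus_qpow (Suc k) * qfact k"
  by (simp add: qfact_def prod.lessThan_Suc_shift del: prod.lessThan_Suc)

lemma qfalling_Suc: "qfalling N (Suc k) = one_minus_qpow N * qfalling (N - 1) k"
  by (simp add: qfalling_def prod.lessThan_Suc_shift del: prod.lessThan_Suc)

lemma qfalling_Suc': "qfalling N (Suc k) = qfalling N k * one_minus_qpow (N - k)"
  by (simp add: qfalling_def)

lemma one_minus_qpow_nonzero: "j \<noteq> 0 \<Longrightarrow> one_minus_qpow j \<noteq> 0"
proof
  assume "j \<noteq> 0" "one_minus_qpow j = 0"
  then have "coeff (one_minus_qpow j) 0 = 0" by simp
  with \<open>j \<noteq> 0\<close> show False by (simp add: one_minus_qpow_def)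
qed

lemma qfact_nonzero: "qfact k \<noteq> 0"
  unfolding qfact_def by (auto simp: prod_zero_iff one_minus_qpow_nonzero)

text \<open>The generating function of partitions in a \<open>k \<times> r\<close> box is the Gaussian polynomial
  \<open>[r + k, k]\<^sub>q\<close>; this is its Pascal recursion cleared of denominators.\<close>

lemma box_poly_times_qfact: "box_poly r k * qfact k = qfalling (r + k) k"
proof (induction k arbitrary: r)
  case 0
  then show ?case by (simp add: box_poly_0_right qfact_def qfalling_def)
next
  case (Suc k)
  note outer = Suc.IH
  show ?case
  proof (induction r)
    case 0
    then show ?case by (simp add: box_poly_0_left qfact_def qfalling_def)
  next
    case (Suc r)
    have pascal: "one_minus_qpow (Suc k) + monom 1 (Suc k) * one_minus_qpow (Suc r)
        = one_minus_qpow (Suc r + Suc k)"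
      by (simp add: one_minus_qpow_def algebra_simps mult_monom)
    have "box_poly (Suc r) (Suc k) * qfact (Suc k)
        = (box_poly (Suc r) k * qfact k) * one_minus_qpow (Suc k)
          + monom 1 (Suc k) * (box_poly r (Suc k) * qfact (Suc k))"
      by (simp add: box_poly_Suc_Suc qfact_Suc algebra_simps)
    also have "\<dots> = qfalling (Suc r + k) k * one_minus_qpow (Suc k)
          + monom 1 (Suc k) * (qfalling (Suc r + k) k * one_minus_qpow (Suc r))"
      using Suc.IH outer[of "Suc r"] by (simp add: qfalling_Suc')
    also have "\<dots> = qfalling (Suc r + k) k *
        (one_minus_qpow (Suc k) + monom 1 (Suc k) * one_minus_qpow (Suc r))"
      by (simp add: algebra_simps)
    also have "\<dots> = qfalling (Suc r + k) k * one_minus_qpow (Suc r + Suc k)"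
      by (simp only: pascal)
    also have "\<dots> = qfalling (Suc r + Suc k) (Suc k)"
      by (simp add: qfalling_Suc mult.commute)
    finally show ?case .
  qed
qed

lemma gauss_poly_times_qfact: "m \<le> n \<Longrightarrow> gauss_poly n m * qfact m = qfalling n m"
proof -
  assume "m \<le> n"
  then have "qfalling n m = box_poly (n - m) m * qfact m" using box_poly_times_qfact[of "n - m" m] by simp
  then show ?thesis
    unfolding gauss_poly_def qfact_def[symmetric] unfolding qfalling_def[symmetric]
    by (simp add: qfact_nonzero)
qed

lemma q_kaplansky_eq_box_poly_diff:
  assumes m: "m = Suc (Suc k)" and n: "n = r + k + 1" and r: "0 < r"
  shows "q_kaplansky n m = box_poly r m - monom 1 r * box_poly r k"
proof -
  let ?P = "qfalling (r + k) k"
  have gauss: "gauss_poly n m * qfact m = one_minus_qpow n * ?P * one_minus_qpow r"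
  proof -
    have "gauss_poly n m * qfact m = qfalling n (Suc (Suc k))"
      using gauss_poly_times_qfact[of m n] m n r by simp
    also have "\<dots> = one_minus_qpow n * qfalling (r + k) (Suc k)"
      by (subst qfalling_Suc) (simp add: n)
    also have "qfalling (r + k) (Suc k) = ?P * one_minus_qpow r"
      by (simp add: qfalling_Suc')
    finally show ?thesis by (simp add: mult.assoc)
  qed
  have big: "box_poly r m * qfact m = one_minus_qpow (n + 1) * one_minus_qpow n * ?P"
    using box_poly_times_qfact[of r m] assms by (simp add: qfalling_Suc algebra_simps)
  have small: "box_poly r k * qfact m = ?P * one_minus_qpow (Suc k) * one_minus_qpow (Suc (Suc k))"
    using box_poly_times_qfact[of r k] m by (simp add: qfact_Suc algebra_simps)
  have core: "one_minus_qpow (n + m) * one_minus_qpow r =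
      one_minus_qpow (n + 1) * one_minus_qpow n
      - monom 1 r * (one_minus_qpow (Suc k) * one_minus_qpow (Suc (Suc k)))"
    unfolding one_minus_qpow_def monom_altdef m n by (simp add: power_add algebra_simps)
  have "one_minus_qpow (n + m) * gauss_poly n m * qfact m
      = (one_minus_qpow (n + m) * one_minus_qpow r) * one_minus_qpow n * ?P"
    by (simp add: mult.assoc gauss)
  also have "\<dots> = (box_poly r m * qfact m - monom 1 r * (box_poly r k * qfact m)) * one_minus_qpow n"
    unfolding core big small by (simp add: algebra_simps)
  also have "\<dots> = (box_poly r m - monom 1 r * box_poly r k) * one_minus_qpow n * qfact m"
    by (simp add: algebra_simps)
  finally have "one_minus_qpow (n + m) * gauss_poly n m = (box_poly r m - monom 1 r * box_poly r k) * one_minus_qpow n"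
    using qfact_nonzero[of m] by simp
  moreover have "one_minus_qpow n \<noteq> 0" using n by (simp add: one_minus_qpow_nonzero)
  ultimately show ?thesis by (simp add: q_kaplansky_def)
qed

section \<open>Monomials by degree and weight\<close>

text \<open>Monomials in \<open>x\<^sub>0, \<dots>, x\<^sub>r\<close> of degree \<open>k\<close> and weight \<open>d - s\<close>: the shift \<open>s = r\<close> indexes the
  multiples of \<^const>\<open>quadric\<close> (which has weight \<open>r\<close>) by the weight of the product.\<close>

definition Mons :: "nat \<Rightarrow> nat \<Rightarrow> nat \<Rightarrow> nat \<Rightarrow> monomial set" where
  "Mons r k s d = {a. keys a \<subseteq> {..r} \<and> mdeg a = k \<and> mweight a + s = d}"

definition exp_list :: "nat \<Rightarrow> monomial \<Rightarrow> nat list" where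
  "exp_list r a = map (lookup a) [0..<Suc r]"

lemma pairing_upto: "keys a \<subseteq> {..r} \<Longrightarrow> pairing g a = (\<Sum>i<Suc r. g i * of_nat (lookup a i))"
  by (rule pairing_superset) auto

lemma exp_list_stats:
  assumes "keys a \<subseteq> {..r}"
  shows "sum_list (exp_list r a) = mdeg a" "list_weight (exp_list r a) = mweight a"
  using assms
  by (simp_all add: exp_list_def pairing_upto list_weight_def atLeast0LessThan
      sum_set_upt_conv_sum_list_nat[symmetric] del: upt_Suc)

lemma bij_betw_exp_list: "bij_betw (exp_list r) (Mons r k 0 d) (exp_lists r k d)"
proof (rule bij_betw_byWitness[where f'="Poly_Mapping.nth"])
  show "\<forall>a\<in>Mons r k 0 d. Poly_Mapping.nth (exp_list r a) = a"
  proof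
    fix a assume a: "a \<in> Mons r k 0 d"
    show "Poly_Mapping.nth (exp_list r a) = a"
      by (rule poly_mapping_eqI, case_tac "x \<le> r")
        (use a in \<open>auto simp: exp_list_def nth_default_def Mons_def in_keys_iff simp del: upt_Suc\<close>)
  qed
  show "\<forall>xs\<in>exp_lists r k d. exp_list r (Poly_Mapping.nth xs) = xs"
    by (auto simp: exp_lists_def exp_list_def nth_default_def simp del: upt_Suc intro!: nth_equalityI)
  show "exp_list r ` Mons r k 0 d \<subseteq> exp_lists r k d"
    by (auto simp: Mons_def exp_lists_def exp_list_stats) (simp add: exp_list_def)
  show "Poly_Mapping.nth ` exp_lists r k d \<subseteq> Mons r k 0 d"
  proof
    fix a assume "a \<in> Poly_Mapping.nth ` exp_lists r k d"
    then obtain xs where xs: "xs \<in> exp_lists r k d" "a = Poly_Mapping.nth xs" by blast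
    have lookup_a: "lookup a i = (if i < Suc r then xs ! i else 0)" for i
      using xs by (simp add: exp_lists_def nth_default_def)
    have keys_a: "keys a \<subseteq> {..r}" by (auto simp: in_keys_iff lookup_a split: if_splits)
    have "exp_list r a = xs"
      using xs by (auto simp: exp_lists_def exp_list_def lookup_a nth_default_def simp del: upt_Suc intro!: nth_equalityI)
    then show "a \<in> Mons r k 0 d"
      using keys_a xs(1) exp_list_stats[OF keys_a] by (simp add: Mons_def exp_lists_def)
  qed
qed

lemma Mons_shift: "Mons r k s d = (if s \<le> d then Mons r k 0 (d - s) else {})"
  by (auto simp: Mons_def)

lemma finite_Mons: "finite (Mons r k s d)"
  using bij_betw_finite[OF bij_betw_exp_list] finite_exp_lists by (simp add: Mons_shift[of r k s d])

lemma card_Mons: "card (Mons r k s d) = (if s \<le> d then box_count r k (d - s) else 0)"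
  using bij_betw_same_card[OF bij_betw_exp_list] by (simp add: Mons_shift[of r k s d] box_count_def)

lemma card_Mons_symmetric:
  assumes "d \<le> r * k + 2 * s"
  shows "card (Mons r k s d) = card (Mons r k s (r * k + 2 * s - d))"
proof (cases "s \<le> d \<and> s \<le> r * k + 2 * s - d")
  case True
  then have "d - s \<le> r * k" "r * k - (d - s) = r * k + 2 * s - d - s"
    using assms by auto
  then have "box_count r k (d - s) = box_count r k (r * k + 2 * s - d - s)"
    using box_count_symmetric[of "d - s" r k] by simp
  then show ?thesis using True by (simp add: card_Mons)
next
  case False
  then show ?thesis using assms by (auto simp: card_Mons box_count_eq_0)
qed

lemma raise_op_span_Mons:
  assumes "v \<in> V.span (pm_monom ` Mons r k s d)"
  shows "raise_op r v \<in> V.span (pm_monom ` Mons r k s (Suc d))"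
  using qlinear_raise_op _ assms
proof (rule qlinear_image_span)
  fix b assume "b \<in> pm_monom ` Mons r k s d"
  then obtain a where a: "a \<in> Mons r k s d" "b = pm_monom a" by blast
  show "raise_op r b \<in> V.span (pm_monom ` Mons r k s (Suc d))"
    unfolding a(2) raise_op_def
  proof (rule var_derivation_monom_in_span)
    fix i assume i: "i \<in> keys a" and "raise_coeff r i \<noteq> 0"
    then have "i < r" using a(1) by (cases "i = r") (auto simp: raise_coeff_def Mons_def)
    then show "a - unit_exp i + unit_exp (Suc i) \<in> Mons r k s (Suc d)"
      using a(1) mdeg_exchange[OF i] pairing_exchange[OF i, of "\<lambda>i. i" "Suc i"]
        keys_exchange[of a i "Suc i"] by (auto simp: Mons_def)
  qed
qed

lemma lower_op_span_Mons:
  assumes "v \<in> V.span (pm_monom ` Mons r k s (Suc d))"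
  shows "lower_op v \<in> V.span (pm_monom ` Mons r k s d)"
  using qlinear_lower_op _ assms
proof (rule qlinear_image_span)
  fix b assume "b \<in> pm_monom ` Mons r k s (Suc d)"
  then obtain a where a: "a \<in> Mons r k s (Suc d)" "b = pm_monom a" by blast
  show "lower_op b \<in> V.span (pm_monom ` Mons r k s d)"
    unfolding a(2) lower_op_def
  proof (rule var_derivation_monom_in_span)
    fix i assume i: "i \<in> keys a" and "lower_coeff i \<noteq> 0"
    then have "0 < i" "i \<le> r" using a(1) by (auto simp: lower_coeff_def Mons_def split: if_splits)
    then show "a - unit_exp i + unit_exp (i - 1) \<in> Mons r k s d"
      using a(1) mdeg_exchange[OF i] pairing_exchange[OF i, of "\<lambda>i. i" "i - 1"]
        keys_exchange[of a i "i - 1"] by (auto simp: Mons_def)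
  qed
qed

lemma lower_op_span_Mons_0:
  assumes "v \<in> V.span (pm_monom ` Mons r k 0 0)"
  shows "lower_op v = 0"
proof -
  have "lower_op v \<in> V.span (pm_monom ` {})"
    using qlinear_lower_op _ assms
  proof (rule qlinear_image_span)
    fix b assume "b \<in> pm_monom ` Mons r k 0 0"
    then obtain a where a: "a \<in> Mons r k 0 0" "b = pm_monom a" by blast
    show "lower_op b \<in> V.span (pm_monom ` {})"
      unfolding a(2) lower_op_def
    proof (rule var_derivation_monom_in_span)
      fix i assume "i \<in> keys a" and "lower_coeff i \<noteq> 0"
      then show "a - unit_exp i + unit_exp (i - 1) \<in> {}"
        using a(1) by (auto simp: lower_coeff_def Mons_def pairing_def in_keys_iff)
    qed
  qed
  then show ?thesis by simp
qed

lemma commutator_span_Mons: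
  assumes "v \<in> V.span (pm_monom ` Mons r k 0 d)"
  shows "raise_op r (lower_op v) - lower_op (raise_op r v) = mscale (2 * of_nat d - of_nat (r * k)) v"
  using _ _ assms
proof (rule VP.linear_eq_on)
  show "qlinear (\<lambda>v. raise_op r (lower_op v) - lower_op (raise_op r v))"
    using derivation_commutator[OF derivation_raise_op derivation_lower_op] by (simp add: derivation_def)
  show "qlinear (mscale (2 * of_nat d - of_nat (r * k)))"
    by (rule qlinearI) (simp_all add: V.scale_right_distrib V.scale_scale mult.commute)
  fix b assume "b \<in> pm_monom ` Mons r k 0 d"
  then show "raise_op r (lower_op b) - lower_op (raise_op r b) = mscale (2 * of_nat d - of_nat (r * k)) b"
    by (auto simp: raise_lower_commutator Mons_def mult.commute)
qed

lemma derivation_span_mult_kernel: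
  assumes C: "derivation C" and "C q = 0"
    and maps: "\<And>v. v \<in> V.span (pm_monom ` S) \<Longrightarrow> C v \<in> V.span (pm_monom ` T)"
    and v: "v \<in> V.span ((\<lambda>c. q * pm_monom c) ` S)"
  shows "C v \<in> V.span ((\<lambda>c. q * pm_monom c) ` T)"
  using _ _ v
proof (rule qlinear_image_span)
  show "qlinear C" using C by (simp add: derivation_def)
  fix b assume "b \<in> (\<lambda>c. q * pm_monom c) ` S"
  then obtain c where c: "c \<in> S" "b = q * pm_monom c" by blast
  have "C (pm_monom c) \<in> V.span (pm_monom ` T)" using maps c(1) by (simp add: V.span_base)
  then have "q * C (pm_monom c) \<in> V.span ((\<lambda>c. q * pm_monom c) ` T)"
    by (rule qlinear_image_span[OF qlinear_mult_left, rotated]) (auto intro: V.span_base)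
  then show "C b \<in> V.span ((\<lambda>c. q * pm_monom c) ` T)"
    using c derivation_mult_kernel[OF C \<open>C q = 0\<close>] by simp
qed

lemma quadric_mult_Mons:
  assumes "c \<in> Mons r k (s + r) d"
  shows "quadric r * pm_monom c \<in> V.span (pm_monom ` Mons r (Suc (Suc k)) s d)"
  unfolding quadric_def sum_distrib_right mscale_mult_left pm_monom_mult
proof (intro V.span_sum V.span_scale V.span_base imageI)
  fix i assume "i \<in> {..r}"
  then show "unit_exp i + unit_exp (r - i) + c \<in> Mons r (Suc (Suc k)) s d"
    using assms by (auto simp: Mons_def pairing_add keys_add_monomial)
qed

lemma graded_sl2_pair_Mons:
  "graded_sl2_pair (raise_op r) lower_op (\<lambda>d. V.span (pm_monom ` Mons r m 0 d))
     (\<lambda>d. V.span ((\<lambda>c. quadric r * pm_monom c) ` Mons r k r d)) (r * m)"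
proof (rule graded_sl2_pair.intro)
  fix d v
  show "v \<in> V.span ((\<lambda>c. quadric r * pm_monom c) ` Mons r k r d) \<Longrightarrow>
      raise_op r v \<in> V.span ((\<lambda>c. quadric r * pm_monom c) ` Mons r k r (Suc d))"
    by (rule derivation_span_mult_kernel[OF derivation_raise_op raise_op_quadric raise_op_span_Mons])
  show "v \<in> V.span ((\<lambda>c. quadric r * pm_monom c) ` Mons r k r (Suc d)) \<Longrightarrow>
      lower_op v \<in> V.span ((\<lambda>c. quadric r * pm_monom c) ` Mons r k r d)"
    by (rule derivation_span_mult_kernel[OF derivation_lower_op lower_op_quadric lower_op_span_Mons])
qed (fact qlinear_raise_op qlinear_lower_op V.subspace_span raise_op_span_Mons lower_op_span_Mons
    lower_op_span_Mons_0 commutator_span_Mons)+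

lemma card_Mons_step:
  assumes r: "even r" "r \<noteq> 0" and m: "m = Suc (Suc k)" and below_middle: "2 * d < r * m"
  shows "card (Mons r m 0 d) + card (Mons r k r (Suc d)) \<le> card (Mons r m 0 (Suc d)) + card (Mons r k r d)"
proof -
  interpret graded_sl2_pair "raise_op r" lower_op "\<lambda>d. V.span (pm_monom ` Mons r m 0 d)"
    "\<lambda>d. V.span ((\<lambda>c. quadric r * pm_monom c) ` Mons r k r d)" "r * m"
    by (rule graded_sl2_pair_Mons)
  have inj_quadric: "inj ((*) (quadric r))"
    using quadric_nonzero[OF r] by (auto simp: inj_def)
  have quadric_image: "(\<lambda>c. quadric r * pm_monom c) ` S = (*) (quadric r) ` pm_monom ` S" for S
    by auto
  have card_A: "card (pm_monom ` Mons r m 0 d) = card (Mons r m 0 d)" for d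
    by (rule card_image) (rule inj_on_subset[OF inj_pm_monom], simp)
  have card_B: "card ((\<lambda>c. quadric r * pm_monom c) ` Mons r k r d) = card (Mons r k r d)" for d
    by (rule card_image, rule inj_on_subset[OF inj_compose[OF inj_quadric inj_pm_monom, unfolded comp_def]])
      simp
  have indep_B: "V.independent ((\<lambda>c. quadric r * pm_monom c) ` Mons r k r d)" for d
    unfolding quadric_image
    by (rule VP.linear_independent_injective_image[OF qlinear_mult_left independent_pm_monom])
      (rule inj_on_subset[OF inj_quadric], simp)
  have B_A: "(\<lambda>c. quadric r * pm_monom c) ` Mons r k r d \<subseteq> V.span (pm_monom ` Mons r m 0 d)" for d
    using quadric_mult_Mons[where s=0] m by (simp add: image_subset_iff)
  have "card (pm_monom ` Mons r m 0 d) + card ((\<lambda>c. quadric r * pm_monom c) ` Mons r k r (Suc d))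
      \<le> card (pm_monom ` Mons r m 0 (Suc d)) + card ((\<lambda>c. quadric r * pm_monom c) ` Mons r k r d)"
    by (rule card_le_of_injective_modulo[OF qlinear_raise_op finite_imageI[OF finite_Mons]
          finite_imageI[OF finite_Mons] finite_imageI[OF finite_Mons] finite_imageI[OF finite_Mons]
          independent_pm_monom independent_pm_monom indep_B indep_B B_A B_A E_A
          raise_reflects_B[OF below_middle]])
  then show ?thesis by (simp add: card_A card_B)
qed

lemma coeff_q_kaplansky:
  assumes "m = Suc (Suc k)" and "n = r + k + 1" and "0 < r"
  shows "coeff (q_kaplansky n m) d = of_nat (card (Mons r m 0 d)) - of_nat (card (Mons r k r d))"
  by (simp add: q_kaplansky_eq_box_poly_diff[OF assms] coeff_monom_mult coeff_box_poly card_Mons not_less)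

lemma symmetric_unimodal:
  fixes f :: "nat \<Rightarrow> 'a::linorder"
  assumes sym: "\<And>i. i \<le> D \<Longrightarrow> f i = f (D - i)" and step: "\<And>d. 2 * d < D \<Longrightarrow> f d \<le> f (Suc d)"
  shows "(\<forall>i j. i \<le> j \<and> j \<le> D div 2 \<longrightarrow> f i \<le> f j)
       \<and> (\<forall>i j. D div 2 \<le> i \<and> i \<le> j \<and> j \<le> D \<longrightarrow> f j \<le> f i)"
proof -
  have mono: "f i \<le> f j" if "i \<le> j" "2 * j \<le> Suc D" for i j
    using that
  proof (induction j)
    case (Suc j)
    show ?case
    proof (cases "i = Suc j")
      case False
      then have "f i \<le> f j" using Suc by simp
      also have "f j \<le> f (Suc j)" using step Suc.prems by simp
      finally show ?thesis .
    qed simp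
  qed simp
  have "f j \<le> f i" if "D div 2 \<le> i" "i \<le> j" "j \<le> D" for i j
    using mono[of "D - j" "D - i"] sym[of i] sym[of j] that by simp
  then show ?thesis using mono by auto
qed

theorem theorem1p5:
  fixes n m :: nat
  assumes "2 \<le> m" and "m \<le> n" and "odd (n - m)"
  defines "D \<equiv> m * (n - m) + m"
  shows "(\<forall>i\<le>D. coeff (q_kaplansky n m) i = coeff (q_kaplansky n m) (D - i))
       \<and> (\<forall>i j. i \<le> j \<and> j \<le> D div 2 \<longrightarrow> coeff (q_kaplansky n m) i \<le> coeff (q_kaplansky n m) j)
       \<and> (\<forall>i j. D div 2 \<le> i \<and> i \<le> j \<and> j \<le> D \<longrightarrow> coeff (q_kaplansky n m) j \<le> coeff (q_kaplansky n m) i)"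
proof -
  define r k where "r = n - m + 1" and "k = m - 2"
  have m: "m = Suc (Suc k)" and n: "n = r + k + 1" and r: "even r" "r \<noteq> 0"
    using assms(1-3) by (auto simp: r_def k_def)
  have D: "D = r * m"
    using r(2) by (cases r) (simp_all add: D_def n m algebra_simps)
  have rm: "r * m = r * k + 2 * r"
    using m by simp
  let ?c = "coeff (q_kaplansky n m)"
  have c: "?c d = of_nat (card (Mons r m 0 d)) - of_nat (card (Mons r k r d))" for d
    using coeff_q_kaplansky[OF m n] r by simp
  have sym: "?c i = ?c (D - i)" if "i \<le> D" for i
    using card_Mons_symmetric[of i r m 0] card_Mons_symmetric[of i r k r] that
    by (simp add: c D rm)
  have "?c d \<le> ?c (Suc d)" if "2 * d < D" for d
    using card_Mons_step[OF r m, of d] that D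
    by (simp add: c le_diff_eq diff_le_eq flip: of_nat_add)
  then show ?thesis using sym symmetric_unimodal[of D ?c] by blast
qed

end
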